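(* Let $X$ be a Banach space with a normalized $1$-unconditional basis $(e_i)_{i=1}^\infty$. There exists $P\subseteq\mathbb{N}$ such that for all $k\in\mathbb{N}$, \[\psi_P(k)\geq\tfrac12(\psi(k)-1).\]
   Context: Identify finitely supported real sequences with elements of $X$ via $e_i$; for finite $A\subseteq\mathbb{N}$, $1_A=\sum_{i\in A}e_i$. Define $\psi(k)=\|1_{[1,k]}\|_X$ and, for $P\subseteq\mathbb{N}$ with complement $P^c=\mathbb{N}\setminus P$, $\psi_P(k)=\min\{\|1_{[1,k]\cap P}\|_X,\|1_{[1,k]\cap P^c}\|_X\}$. Normalized means $\|e_i\|_X=1$; $1$-unconditional means $\|\sum_{i=1}^n a_ie_i\|_X\le\|\sum_{i=1}^n b_ie_i\|_X$ whenever $|a_i|\le|b_i|$ for all $i$. (Standing assumption in the paper: the basis is not equivalent to the standard basis of $c_0$.) *)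

theory Defs
  imports "HOL-Analysis.Analysis"
begin

text \<open>A (Schauder) basis e_1, e_2, ... of a Banach space (index 0 unused):
  every x has a unique coefficient sequence a (with a 0 = 0) such that
  the partial sums sum_{i=1}^n a_i e_i converge to x.\<close>
definition schauder_basis :: "(nat \<Rightarrow> 'a::banach) \<Rightarrow> bool" where
  "schauder_basis e \<longleftrightarrow>
     (\<forall>x. \<exists>!a::nat \<Rightarrow> real. a 0 = 0 \<and> (\<lambda>n. \<Sum>i=1..n. a i *\<^sub>R e i) \<longlonglongrightarrow> x)"

definition normalized_basis :: "(nat \<Rightarrow> 'a::real_normed_vector) \<Rightarrow> bool" where
  "normalized_basis e \<longleftrightarrow> (\<forall>i\<ge>1. norm (e i) = 1)"

definition one_unconditional :: "(nat \<Rightarrow> 'a::real_normed_vector) \<Rightarrow> bool" where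
  "one_unconditional e \<longleftrightarrow>
     (\<forall>n (a::nat \<Rightarrow> real) b. (\<forall>i\<in>{1..n}. \<bar>a i\<bar> \<le> \<bar>b i\<bar>) \<longrightarrow>
        norm (\<Sum>i=1..n. a i *\<^sub>R e i) \<le> norm (\<Sum>i=1..n. b i *\<^sub>R e i))"

definition ind :: "(nat \<Rightarrow> 'a::real_normed_vector) \<Rightarrow> nat set \<Rightarrow> 'a" where
  "ind e A = (\<Sum>i\<in>A. e i)"

definition psi :: "(nat \<Rightarrow> 'a::real_normed_vector) \<Rightarrow> nat \<Rightarrow> real" where
  "psi e k = norm (ind e {1..k})"

definition psiP :: "(nat \<Rightarrow> 'a::real_normed_vector) \<Rightarrow> nat set \<Rightarrow> nat \<Rightarrow> real" where
  "psiP e P k = min (norm (ind e ({1..k} \<inter> P))) (norm (ind e ({1..k} \<inter> ({1..} - P))))"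

end

theory Submission
  imports Defs
begin

text \<open>Split {1, ..., n} greedily: the next index n + 1 goes to whichever of the two
  current parts has the smaller norm of its indicator. By 1-unconditionality adding an
  index never decreases that norm, and by normalization it increases it by at most 1,
  so the two norms always stay within 1 of each other. Their sum dominates psi(k) by
  the triangle inequality, hence both are at least (psi(k) - 1) / 2. Since the splits
  of successive initial segments extend each other, they are the traces of a single
  set P.\<close>

lemma one_unconditionalD:
  assumes "one_unconditional e" and "\<And>i. i \<in> {1..n} \<Longrightarrow> \<bar>a i\<bar> \<le> \<bar>b i\<bar>"
  shows "norm (\<Sum>i=1..n. a i *\<^sub>R e i) \<le> norm (\<Sum>i=1..n. b i *\<^sub>R e i)"
  using assms unfolding one_unconditional_def by blast

lemma ind_eq_sum_indicator:
  fixes e :: "nat \<Rightarrow> 'a::real_normed_vector"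
  assumes "S \<subseteq> {1..m}"
  shows "ind e S = (\<Sum>i=1..m. (if i \<in> S then 1 else 0) *\<^sub>R e i)"
proof -
  have "(\<Sum>i=1..m. (if i \<in> S then 1 else 0) *\<^sub>R e i) = (\<Sum>i=1..m. if i \<in> S then e i else 0)"
    by (rule sum.cong) auto
  also have "\<dots> = sum e ({1..m} \<inter> S)"
    by (simp add: sum.inter_restrict)
  also have "{1..m} \<inter> S = S"
    using assms by auto
  finally show ?thesis by (simp add: ind_def)
qed

lemma norm_ind_mono:
  fixes e :: "nat \<Rightarrow> 'a::real_normed_vector"
  assumes uc: "one_unconditional e" and "S \<subseteq> T" and "finite T" and "0 \<notin> T"
  shows "norm (ind e S) \<le> norm (ind e T)"
proof -
  obtain m where "T \<subseteq> {..m}"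
    using \<open>finite T\<close> finite_nat_iff_bounded_le by auto
  with \<open>0 \<notin> T\<close> have T: "T \<subseteq> {1..m}"
    by (metis atLeastAtMost_iff atMost_iff less_one not_le subset_eq)
  have "norm (\<Sum>i=1..m. (if i \<in> S then 1 else 0) *\<^sub>R e i)
      \<le> norm (\<Sum>i=1..m. (if i \<in> T then 1 else 0) *\<^sub>R e i)"
    by (rule one_unconditionalD[OF uc]) (use \<open>S \<subseteq> T\<close> in auto)
  then show ?thesis
    using ind_eq_sum_indicator[OF T, of e]
      ind_eq_sum_indicator[OF order_trans[OF \<open>S \<subseteq> T\<close> T], of e]
    by simp
qed

lemma norm_ind_insert_le:
  fixes e :: "nat \<Rightarrow> 'a::real_normed_vector"
  assumes "normalized_basis e" and "i \<ge> 1" and "i \<notin> S" and "finite S"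
  shows "norm (ind e (insert i S)) \<le> norm (ind e S) + 1"
proof -
  have "ind e (insert i S) = e i + ind e S"
    using assms(3,4) by (simp add: ind_def)
  moreover have "norm (e i) = 1"
    using assms(1,2) by (simp add: normalized_basis_def)
  ultimately show ?thesis
    using norm_triangle_ineq[of "e i" "ind e S"] by simp
qed

lemma psi_le_norm_ind_split:
  fixes e :: "nat \<Rightarrow> 'a::real_normed_vector"
  assumes "A \<subseteq> {1..k}"
  shows "psi e k \<le> norm (ind e A) + norm (ind e ({1..k} - A))"
proof -
  have "ind e {1..k} = ind e ({1..k} - A) + ind e A"
    unfolding ind_def using assms by (simp add: sum.subset_diff)
  then show ?thesis
    unfolding psi_def using norm_triangle_ineq[of "ind e ({1..k} - A)" "ind e A"] by simp
qed

fun greedy_part :: "(nat \<Rightarrow> 'a::real_normed_vector) \<Rightarrow> nat \<Rightarrow> nat set" where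
  "greedy_part e 0 = {}"
| "greedy_part e (Suc n) =
     (if norm (ind e (greedy_part e n)) \<le> norm (ind e ({1..n} - greedy_part e n))
      then insert (Suc n) (greedy_part e n) else greedy_part e n)"

lemma greedy_part_subset: "greedy_part e n \<subseteq> {1..n}"
  by (induction n) auto

lemma greedy_part_restrict: "m \<le> k \<Longrightarrow> greedy_part e k \<inter> {1..m} = greedy_part e m"
proof (induction k)
  case 0
  then show ?case by simp
next
  case (Suc k)
  show ?case
  proof (cases "m = Suc k")
    case True
    then show ?thesis using greedy_part_subset[of e "Suc k"] by auto
  next
    case False
    with Suc have "greedy_part e (Suc k) \<inter> {1..m} = greedy_part e k \<inter> {1..m}"
      by auto
    with Suc False show ?thesis by simp
  qed
qed

lemma greedy_part_balanced:
  fixes e :: "nat \<Rightarrow> 'a::real_normed_vector"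
  assumes nb: "normalized_basis e" and uc: "one_unconditional e"
  shows "\<bar>norm (ind e (greedy_part e k)) - norm (ind e ({1..k} - greedy_part e k))\<bar> \<le> 1"
proof (induction k)
  case 0
  then show ?case by (simp add: ind_def)
next
  case (Suc n)
  define A where "A = greedy_part e n"
  define B where "B = {1..n} - A"
  have A: "A \<subseteq> {1..n}" "Suc n \<notin> A" "finite A"
    using greedy_part_subset[of e n] finite_subset unfolding A_def by auto
  have B: "B \<subseteq> {1..n}" unfolding B_def by auto
  have grow: "norm (ind e C) \<le> norm (ind e (insert (Suc n) C))"
    "norm (ind e (insert (Suc n) C)) \<le> norm (ind e C) + 1"
    if C: "C \<subseteq> {1..n}" for C
  proof -
    have "finite C" "0 \<notin> insert (Suc n) C" "Suc n \<notin> C"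
      using C finite_subset[OF C] by auto
    then show "norm (ind e C) \<le> norm (ind e (insert (Suc n) C))"
      "norm (ind e (insert (Suc n) C)) \<le> norm (ind e C) + 1"
      using norm_ind_mono[OF uc subset_insertI] norm_ind_insert_le[OF nb] by auto
  qed
  have IH: "\<bar>norm (ind e A) - norm (ind e B)\<bar> \<le> 1"
    using Suc.IH unfolding A_def B_def .
  show ?case
  proof (cases "norm (ind e A) \<le> norm (ind e B)")
    case True
    then have "greedy_part e (Suc n) = insert (Suc n) A"
      "{1..Suc n} - greedy_part e (Suc n) = B"
      using A unfolding A_def B_def by auto
    then show ?thesis using True IH grow[OF A(1)] by (simp only: abs_le_iff) linarith
  next
    case False
    then have "greedy_part e (Suc n) = A"
      "{1..Suc n} - greedy_part e (Suc n) = insert (Suc n) B"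
      using A unfolding A_def B_def by auto
    then show ?thesis using False IH grow[OF B] by (simp only: abs_le_iff) linarith
  qed
qed

definition greedy_set :: "(nat \<Rightarrow> 'a::real_normed_vector) \<Rightarrow> nat set" where
  "greedy_set e = (\<Union>n. greedy_part e n)"

lemma greedy_set_subset: "greedy_set e \<subseteq> {1..}"
  using greedy_part_subset by (fastforce simp: greedy_set_def)

lemma greedy_set_Int_atLeastAtMost: "{1..k} \<inter> greedy_set e = greedy_part e k"
proof
  show "{1..k} \<inter> greedy_set e \<subseteq> greedy_part e k"
  proof
    fix i assume "i \<in> {1..k} \<inter> greedy_set e"
    then obtain n where "i \<in> greedy_part e n" "i \<in> {1..k}"
      by (auto simp: greedy_set_def)
    then show "i \<in> greedy_part e k"
      using greedy_part_restrict[of i n e] greedy_part_restrict[of i k e]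
        greedy_part_subset[of e n] by fastforce
  qed
  show "greedy_part e k \<subseteq> {1..k} \<inter> greedy_set e"
    using greedy_part_subset[of e k] by (auto simp: greedy_set_def)
qed

theorem lemma3p1:
  fixes e :: "nat \<Rightarrow> 'a::banach"
  assumes "schauder_basis e"
    and "normalized_basis e"
    and "one_unconditional e"
  shows "\<exists>P \<subseteq> {1..}. \<forall>k\<ge>1. psiP e P k \<ge> (psi e k - 1) / 2"
proof (intro exI conjI allI impI)
  show "greedy_set e \<subseteq> {1..}" by (rule greedy_set_subset)
  fix k :: nat
  let ?A = "greedy_part e k"
  have "{1..k} \<inter> ({1..} - greedy_set e) = {1..k} - {1..k} \<inter> greedy_set e"
    by auto
  then have complement: "{1..k} \<inter> ({1..} - greedy_set e) = {1..k} - ?A"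
    unfolding greedy_set_Int_atLeastAtMost .
  have "psi e k \<le> norm (ind e ?A) + norm (ind e ({1..k} - ?A))"
    by (rule psi_le_norm_ind_split[OF greedy_part_subset])
  moreover have "\<bar>norm (ind e ?A) - norm (ind e ({1..k} - ?A))\<bar> \<le> 1"
    using greedy_part_balanced[OF assms(2,3)] .
  ultimately show "psiP e (greedy_set e) k \<ge> (psi e k - 1) / 2"
    unfolding psiP_def greedy_set_Int_atLeastAtMost complement min_def abs_le_iff
    by simp
qed

end
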